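(* Let $\mathcal{S}$ be a state space, $\mathcal{A}$ a finite action space, $\rho$ a distribution on $\mathcal{S}$, and $r^*:\mathcal{S}\times\mathcal{A}\to\mathbb{R}$ a reward with Bradley–Terry preference model $\mathbb{P}_{r^*}(y=1|s,a,a')=\sigma(r^*(s,a)-r^*(s,a'))$, $\sigma(x)=1/(1+e^{-x})$. Then for any policies $\pi,\tilde\pi$ and any $s\in\mathcal{S}$, $$1-\mathbb{TV}(\pi(\cdot|s)\|\tilde\pi(\cdot|s))\le\min_{\gamma>0}\sqrt{\big(\gamma+2\mathbb{P}_{r^*}(\pi(\cdot|s)\succ\tilde\pi(\cdot|s))\big)\log\frac{1+\gamma}{\gamma}},$$ and $$1-\mathbb{E}_{s\sim\rho}\big[\mathbb{TV}(\pi(\cdot|s)\|\tilde\pi(\cdot|s))\big]\le\min_{\gamma>0}\sqrt{\big(\gamma+2\mathbb{P}_{r^*}(\pi\succ\tilde\pi)\big)\log\frac{1+\gamma}{\gamma}}.$$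
   Context: $\mathbb{TV}(p\|q)=\frac12\sum_a|p(a)-q(a)|$. $\mathbb{P}_{r^*}(\pi(\cdot|s)\succ\tilde\pi(\cdot|s)):=\mathbb{E}_{a\sim\pi(\cdot|s),a'\sim\tilde\pi(\cdot|s)}[\mathbb{P}_{r^*}(y=1|s,a,a')]$ and $\mathbb{P}_{r^*}(\pi\succ\tilde\pi):=\mathbb{E}_{s\sim\rho,a\sim\pi(\cdot|s),a'\sim\tilde\pi(\cdot|s)}[\mathbb{P}_{r^*}(y=1|s,a,a')]$. *)

theory Defs
  imports "HOL-Probability.Probability"
begin

definition sigmoid :: "real \<Rightarrow> real" where
  "sigmoid x = 1 / (1 + exp (- x))"

definition is_policy :: "('s \<Rightarrow> 'a::finite \<Rightarrow> real) \<Rightarrow> bool" where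
  "is_policy \<pi> \<longleftrightarrow> (\<forall>s a. 0 \<le> \<pi> s a) \<and> (\<forall>s. (\<Sum>a\<in>UNIV. \<pi> s a) = 1)"

definition TV :: "('a::finite \<Rightarrow> real) \<Rightarrow> ('a \<Rightarrow> real) \<Rightarrow> real" where
  "TV p q = (1/2) * (\<Sum>a\<in>UNIV. \<bar>p a - q a\<bar>)"

definition BT_pref :: "('s \<Rightarrow> 'a \<Rightarrow> real) \<Rightarrow> 's \<Rightarrow> 'a \<Rightarrow> 'a \<Rightarrow> real" where
  "BT_pref r s a a' = sigmoid (r s a - r s a')"

definition pref_state :: "('s \<Rightarrow> 'a::finite \<Rightarrow> real) \<Rightarrow> ('s \<Rightarrow> 'a \<Rightarrow> real) \<Rightarrow> ('s \<Rightarrow> 'a \<Rightarrow> real) \<Rightarrow> 's \<Rightarrow> real" where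
  "pref_state r \<pi> \<pi>' s = (\<Sum>a\<in>UNIV. \<Sum>a'\<in>UNIV. \<pi> s a * \<pi>' s a' * BT_pref r s a a')"

definition pref :: "'s measure \<Rightarrow> ('s \<Rightarrow> 'a::finite \<Rightarrow> real) \<Rightarrow> ('s \<Rightarrow> 'a \<Rightarrow> real) \<Rightarrow> ('s \<Rightarrow> 'a \<Rightarrow> real) \<Rightarrow> real" where
  "pref \<rho> r \<pi> \<pi>' = (\<integral>s. pref_state r \<pi> \<pi>' s \<partial>\<rho>)"

end

theory Submission
  imports Defs
begin

text \<open>
  Write \<open>m(a) = min (\<pi>(a|s)) (\<pi>'(a|s))\<close>, so that \<open>1 - TV = \<Sum>\<^sub>a m(a)\<close>. Since the
  Bradley-Terry kernel satisfies \<open>\<sigma>(x) + \<sigma>(-x) = 1\<close>, symmetrising the double sum gives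
  \<open>(\<Sum>\<^sub>a m(a))\<^sup>2 = 2 \<Sum>\<^sub>a\<^sub>,\<^sub>b m(a) m(b) \<sigma>(r a - r b) \<le> 2 P(\<pi> \<succ> \<pi>')\<close>.
  As \<open>1 - TV \<le> 1\<close> as well, \<open>(1 - TV)\<^sup>2\<close> is at most the convex combination
  \<open>(\<gamma> + 2 P) / (1 + \<gamma>)\<close> of \<open>1\<close> and \<open>2 P\<close>, and \<open>1 / (1 + \<gamma>) \<le> ln ((1 + \<gamma>) / \<gamma>)\<close>.
  The averaged bound follows by integrating the squared bound and applying
  \<open>(E X)\<^sup>2 \<le> E (X\<^sup>2)\<close>.
\<close>

lemma sigmoid_add_sigmoid_minus: "sigmoid x + sigmoid (- x) = 1"
proof -
  have "1 + exp x \<noteq> 0"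
    by (metis add_pos_pos exp_gt_zero less_irrefl zero_less_one)
  then show ?thesis
    by (simp add: sigmoid_def exp_minus field_simps)
qed

lemma sigmoid_nonneg: "0 \<le> sigmoid x"
  by (simp add: sigmoid_def add_pos_pos)

lemma sigmoid_le_one: "sigmoid x \<le> 1"
  using sigmoid_add_sigmoid_minus[of x] sigmoid_nonneg[of "- x"] by linarith

lemma one_minus_TV_eq_sum_min:
  fixes p q :: "'a::finite \<Rightarrow> real"
  assumes "sum p UNIV = 1" "sum q UNIV = 1"
  shows "1 - TV p q = (\<Sum>a\<in>UNIV. min (p a) (q a))"
proof -
  have "(\<Sum>a\<in>UNIV. min (p a) (q a)) = (\<Sum>a\<in>UNIV. (p a + q a - \<bar>p a - q a\<bar>) / 2)"
    by (intro sum.cong) auto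
  also have "\<dots> = (sum p UNIV + sum q UNIV - (\<Sum>a\<in>UNIV. \<bar>p a - q a\<bar>)) / 2"
    by (simp add: sum_divide_distrib[symmetric] sum_subtractf sum.distrib)
  finally show ?thesis
    using assms by (simp add: TV_def)
qed

lemma TV_nonneg: "0 \<le> TV p q"
  by (simp add: TV_def sum_nonneg)

lemma TV_le_one:
  fixes p q :: "'a::finite \<Rightarrow> real"
  assumes "\<And>a. 0 \<le> p a" "\<And>a. 0 \<le> q a" "sum p UNIV = 1" "sum q UNIV = 1"
  shows "TV p q \<le> 1"
proof -
  have "0 \<le> (\<Sum>a\<in>UNIV. min (p a) (q a))"
    using assms(1,2) by (intro sum_nonneg) simp
  then show ?thesis
    using one_minus_TV_eq_sum_min[OF assms(3,4)] by linarith
qed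

lemma square_sum_min_le_pairwise_sum:
  fixes p q :: "'a::finite \<Rightarrow> real" and d :: "'a \<Rightarrow> 'a \<Rightarrow> real"
  assumes "\<And>a. 0 \<le> p a" "\<And>a. 0 \<le> q a"
    and d_nonneg: "\<And>a b. 0 \<le> d a b" and d_sym: "\<And>a b. d a b + d b a = 1"
  shows "(\<Sum>a\<in>UNIV. min (p a) (q a))\<^sup>2 \<le> 2 * (\<Sum>a\<in>UNIV. \<Sum>b\<in>UNIV. p a * q b * d a b)"
proof -
  define m where "m a = min (p a) (q a)" for a
  have swap: "(\<Sum>a\<in>UNIV. \<Sum>b\<in>UNIV. m a * m b * d a b) = (\<Sum>a\<in>UNIV. \<Sum>b\<in>UNIV. m a * m b * d b a)"
    by (subst sum.swap) (simp add: mult.commute mult.left_commute)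
  have "(sum m UNIV)\<^sup>2 = (\<Sum>a\<in>UNIV. \<Sum>b\<in>UNIV. m a * m b * (d a b + d b a))"
    by (simp add: d_sym power2_eq_square sum_product)
  also have "\<dots> = 2 * (\<Sum>a\<in>UNIV. \<Sum>b\<in>UNIV. m a * m b * d a b)"
    using swap by (simp add: distrib_left sum.distrib)
  also have "\<dots> \<le> 2 * (\<Sum>a\<in>UNIV. \<Sum>b\<in>UNIV. p a * q b * d a b)"
  proof -
    have "m a * m b \<le> p a * q b" for a b
      using assms(1,2) by (intro mult_mono) (auto simp: m_def)
    then show ?thesis
      using d_nonneg by (intro mult_left_mono sum_mono mult_right_mono) auto
  qed
  finally show ?thesis
    by (simp add: m_def)
qed

lemma square_one_minus_TV_le_pref_state:
  assumes "is_policy \<pi>" "is_policy \<pi>'"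
  shows "(1 - TV (\<pi> s) (\<pi>' s))\<^sup>2 \<le> 2 * pref_state r \<pi> \<pi>' s"
proof -
  have sigmoid_sym: "sigmoid (r s a - r s b) + sigmoid (r s b - r s a) = 1" for a b
    using sigmoid_add_sigmoid_minus[of "r s a - r s b"] by simp
  show ?thesis
    using assms square_sum_min_le_pairwise_sum[of "\<pi> s" "\<pi>' s" "\<lambda>a b. sigmoid (r s a - r s b)"]
    by (simp add: is_policy_def one_minus_TV_eq_sum_min pref_state_def BT_pref_def
        sigmoid_nonneg sigmoid_sym)
qed

lemma pref_state_nonneg:
  assumes "is_policy \<pi>" "is_policy \<pi>'"
  shows "0 \<le> pref_state r \<pi> \<pi>' s"
  using assms unfolding pref_state_def BT_pref_def is_policy_def
  by (intro sum_nonneg) (simp add: sigmoid_nonneg)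

lemma pref_state_le_one:
  assumes "is_policy \<pi>" "is_policy \<pi>'"
  shows "pref_state r \<pi> \<pi>' s \<le> 1"
proof -
  have "pref_state r \<pi> \<pi>' s \<le> (\<Sum>a\<in>UNIV. \<Sum>b\<in>UNIV. \<pi> s a * \<pi>' s b)"
    using assms unfolding pref_state_def BT_pref_def is_policy_def
    by (intro sum_mono) (simp add: sigmoid_le_one mult_left_le)
  also have "\<dots> = 1"
    using assms by (simp add: is_policy_def sum_product[symmetric])
  finally show ?thesis .
qed

lemma inverse_one_plus_le_ln_ratio:
  fixes \<gamma> :: real
  assumes "0 < \<gamma>"
  shows "1 / (1 + \<gamma>) \<le> ln ((1 + \<gamma>) / \<gamma>)"
proof -
  have "ln (\<gamma> / (1 + \<gamma>)) \<le> \<gamma> / (1 + \<gamma>) - 1"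
    using assms by (intro ln_le_minus_one) simp
  moreover have "ln (\<gamma> / (1 + \<gamma>)) = - ln ((1 + \<gamma>) / \<gamma>)"
    using assms by (simp add: ln_div)
  moreover have "\<gamma> / (1 + \<gamma>) - 1 = - (1 / (1 + \<gamma>))"
    using assms by (simp add: field_simps)
  ultimately show ?thesis
    by linarith
qed

lemma le_add_mult_ln_ratio:
  fixes y t \<gamma> :: real
  assumes "0 \<le> y" "y \<le> 1" "y \<le> t" "0 < \<gamma>"
  shows "y \<le> (\<gamma> + t) * ln ((1 + \<gamma>) / \<gamma>)"
proof -
  have "\<gamma> * y \<le> \<gamma>"
    using assms by (simp add: mult_left_le)
  then have "y * (1 + \<gamma>) \<le> \<gamma> + t"
    using assms(3) by (simp add: distrib_left mult.commute)
  then have "y \<le> (\<gamma> + t) / (1 + \<gamma>)"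
    using assms(4) by (simp add: pos_le_divide_eq)
  also have "\<dots> = (\<gamma> + t) * (1 / (1 + \<gamma>))"
    by simp
  also have "\<dots> \<le> (\<gamma> + t) * ln ((1 + \<gamma>) / \<gamma>)"
    using assms inverse_one_plus_le_ln_ratio[OF assms(4)] by (intro mult_left_mono) auto
  finally show ?thesis .
qed

lemma square_one_minus_TV_le_ln_ratio_bound:
  assumes "is_policy \<pi>" "is_policy \<pi>'" "0 < \<gamma>"
  shows "(1 - TV (\<pi> s) (\<pi>' s))\<^sup>2 \<le> (\<gamma> + 2 * pref_state r \<pi> \<pi>' s) * ln ((1 + \<gamma>) / \<gamma>)"
proof (rule le_add_mult_ln_ratio)
  have "TV (\<pi> s) (\<pi>' s) \<le> 1"
    using assms by (intro TV_le_one) (auto simp: is_policy_def)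
  then show "(1 - TV (\<pi> s) (\<pi>' s))\<^sup>2 \<le> 1"
    using TV_nonneg by (simp add: abs_square_le_1)
qed (use assms square_one_minus_TV_le_pref_state in auto)

lemma (in prob_space) square_expectation_le:
  fixes X :: "'a \<Rightarrow> real"
  assumes "integrable M X" "integrable M (\<lambda>x. (X x)\<^sup>2)"
  shows "(expectation X)\<^sup>2 \<le> expectation (\<lambda>x. (X x)\<^sup>2)"
  using variance_positive[of X] variance_eq[OF assms] by linarith

lemma (in prob_space) expectation_le_sqrt_expectation:
  fixes X Y :: "'a \<Rightarrow> real"
  assumes "integrable M X" "integrable M (\<lambda>x. (X x)\<^sup>2)" "integrable M Y"
    and "\<And>x. x \<in> space M \<Longrightarrow> (X x)\<^sup>2 \<le> Y x"
  shows "expectation X \<le> sqrt (expectation Y)"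
proof (rule real_le_rsqrt)
  have "(expectation X)\<^sup>2 \<le> expectation (\<lambda>x. (X x)\<^sup>2)"
    using assms(1,2) by (rule square_expectation_le)
  also have "\<dots> \<le> expectation Y"
    using assms by (intro integral_mono) auto
  finally show "(expectation X)\<^sup>2 \<le> expectation Y" .
qed

lemma (in finite_measure) integrable_TV:
  assumes "is_policy \<pi>" "is_policy \<pi>'"
    and "\<And>a. (\<lambda>s. \<pi> s a) \<in> borel_measurable M" "\<And>a. (\<lambda>s. \<pi>' s a) \<in> borel_measurable M"
  shows "integrable M (\<lambda>s. TV (\<pi> s) (\<pi>' s))"
    and "integrable M (\<lambda>s. (1 - TV (\<pi> s) (\<pi>' s))\<^sup>2)"
proof -
  have "TV (\<pi> s) (\<pi>' s) \<le> 1" for s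
    using assms(1,2) by (simp add: TV_le_one is_policy_def)
  moreover have "(\<lambda>s. TV (\<pi> s) (\<pi>' s)) \<in> borel_measurable M"
    using assms(3,4) unfolding TV_def by measurable
  ultimately show "integrable M (\<lambda>s. TV (\<pi> s) (\<pi>' s))"
    and "integrable M (\<lambda>s. (1 - TV (\<pi> s) (\<pi>' s))\<^sup>2)"
    by (auto intro!: integrable_const_bound[where B = 1] simp: abs_of_nonneg abs_square_le_1 TV_nonneg)
qed

lemma (in finite_measure) integrable_pref_state:
  assumes "is_policy \<pi>" "is_policy \<pi>'" "\<And>a. (\<lambda>s. r s a) \<in> borel_measurable M"
    and "\<And>a. (\<lambda>s. \<pi> s a) \<in> borel_measurable M" "\<And>a. (\<lambda>s. \<pi>' s a) \<in> borel_measurable M"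
  shows "integrable M (pref_state r \<pi> \<pi>')"
proof (rule integrable_const_bound[where B = 1])
  show "pref_state r \<pi> \<pi>' \<in> borel_measurable M"
    using assms(3-5) unfolding pref_state_def BT_pref_def sigmoid_def by measurable
qed (use assms(1,2) in \<open>auto simp: abs_of_nonneg pref_state_nonneg pref_state_le_one\<close>)

theorem lemmaG2:
  fixes \<rho> :: "'s measure"
    and r :: "'s \<Rightarrow> 'a::finite \<Rightarrow> real"
    and \<pi> \<pi>' :: "'s \<Rightarrow> 'a \<Rightarrow> real"
  assumes "prob_space \<rho>"
    and "\<And>a. (\<lambda>s. r s a) \<in> borel_measurable \<rho>"
    and "is_policy \<pi>" and "is_policy \<pi>'"
    and "\<And>a. (\<lambda>s. \<pi> s a) \<in> borel_measurable \<rho>"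
    and "\<And>a. (\<lambda>s. \<pi>' s a) \<in> borel_measurable \<rho>"
  shows "(\<forall>s. \<forall>\<gamma>>0. 1 - TV (\<pi> s) (\<pi>' s)
            \<le> sqrt ((\<gamma> + 2 * pref_state r \<pi> \<pi>' s) * ln ((1 + \<gamma>) / \<gamma>)))
       \<and> (\<forall>\<gamma>>0. 1 - (\<integral>s. TV (\<pi> s) (\<pi>' s) \<partial>\<rho>)
            \<le> sqrt ((\<gamma> + 2 * pref \<rho> r \<pi> \<pi>') * ln ((1 + \<gamma>) / \<gamma>)))"
proof (intro conjI allI impI)
  interpret prob_space \<rho> by fact
  fix \<gamma> :: real
  assume "0 < \<gamma>"
  note bound = square_one_minus_TV_le_ln_ratio_bound[OF assms(3,4) this]
  show "1 - TV (\<pi> s) (\<pi>' s) \<le> sqrt ((\<gamma> + 2 * pref_state r \<pi> \<pi>' s) * ln ((1 + \<gamma>) / \<gamma>))" for s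
    using bound by (rule real_le_rsqrt)
  note integrable = integrable_TV[OF assms(3-6)] integrable_pref_state[OF assms(3,4,2,5,6)]
  have "1 - expectation (\<lambda>s. TV (\<pi> s) (\<pi>' s)) = expectation (\<lambda>s. 1 - TV (\<pi> s) (\<pi>' s))"
    using integrable by (simp add: prob_space)
  also have "\<dots> \<le> sqrt (expectation (\<lambda>s. (\<gamma> + 2 * pref_state r \<pi> \<pi>' s) * ln ((1 + \<gamma>) / \<gamma>)))"
    using integrable bound by (intro expectation_le_sqrt_expectation) auto
  also have "\<dots> = sqrt ((\<gamma> + 2 * pref \<rho> r \<pi> \<pi>') * ln ((1 + \<gamma>) / \<gamma>))"
    using integrable by (simp add: pref_def prob_space algebra_simps)
  finally show "1 - expectation (\<lambda>s. TV (\<pi> s) (\<pi>' s))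
      \<le> sqrt ((\<gamma> + 2 * pref \<rho> r \<pi> \<pi>') * ln ((1 + \<gamma>) / \<gamma>))" .
qed

end
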